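(* Let $(\mathcal H,X)$ be a stable arrangement of $n$ hyperplanes in $\mathbb R^d$, $\mathcal C=\mathrm{code}(\mathcal H,X)$, and let $F\in\Gamma(\mathcal C)$ be a face with $|F|<n$ such that the region $R_F$ is nonempty. Then $(\{H_i^+\cap R_F\}_{i\notin\underline F},R_F)$ is a stable arrangement. Moreover, the nerve of $\{H_i^+\cap R_F,\ H_i^-\cap R_F\}_{i\in[n]\setminus\underline F}$ (vertex $i$ for $H_i^+\cap R_F$, vertex $\bar i$ for $H_i^-\cap R_F$) is either collapsible or equal to $\Gamma(2^{[n]\setminus\underline F})$.
   Context: An oriented affine hyperplane is $H_i=\{x:w_i\cdot x-h_i=0\}$ with $w_i\neq0$, $H_i^+=\{w_i\cdot x-h_i>0\}$, $H_i^-=\{w_i\cdot x-h_i<0\}$. For hyperplanes $\{H_i\}_{i\in I}$ and open convex $Y$, the atom of $\sigma\subseteq I$ is $\bigl(\bigcap_{i\in\sigma}(H_i^+\cap Y)\bigr)\setminus\bigcup_{j\in I\setminus\sigma}H_j^+$ (for $\sigma=\emptyset$: $Y\setminus\bigcup_iH_i^+$), the code is the set of $\sigma$ with nonempty atom, and the arrangement is stable if $Y$ is open convex and for every $\sigma\subseteq I$ with $Y\cap\bigcap_{i\in\sigma}H_i\neq\emptyset$, $\dim\bigcap_{i\in\sigma}H_i=d-|\sigma|$. The polar complex $\Gamma(\mathcal C)$ is the simplicial complex on $[n]\sqcup\{\bar1,\dots,\bar n\}$ of all subsets of $\Sigma(\sigma)=\sigma\sqcup\{\bar i:i\notin\sigma\}$,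 $\sigma\in\mathcal C$. A face $F$ is written $F=F^+\sqcup\{\bar j:j\in F^-\}$ with $F^\pm\subseteq[n]$; its support is $\underline F=F^+\cup F^-$, and $R_F=X\cap\bigcap_{i\in F^+}H_i^+\cap\bigcap_{j\in F^-}H_j^-$. For $S\subseteq[n]$, $\Gamma(2^S)$ is the complex on $S\sqcup\{\bar i:i\in S\}$ whose faces are the subsets containing no pair $\{i,\bar i\}$. The nerve of $\{V_v\}_{v\in V}$ is $\{S\subseteq V:\bigcap_{v\in S}V_v\ne\emptyset\}$. A free pair in a complex $\Delta$ is $(\sigma,\tau)$ with $\tau$ a facet, $\sigma\subsetneq\tau$, $\sigma$ in no other facet; collapsing along $\sigma$ gives $\{\nu\in\Delta:\nu\not\supseteq\sigma\}$; $\Delta$ is collapsible if finitely many collapses yield the void complex $\{\}$. *)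

theory Defs
  imports "HOL-Analysis.Analysis"
begin

definition hyp :: "(nat \<Rightarrow> 'a::euclidean_space) \<Rightarrow> (nat \<Rightarrow> real) \<Rightarrow> nat \<Rightarrow> 'a set" where
  "hyp w h i = {x. w i \<bullet> x - h i = 0}"

definition hplus :: "(nat \<Rightarrow> 'a::euclidean_space) \<Rightarrow> (nat \<Rightarrow> real) \<Rightarrow> nat \<Rightarrow> 'a set" where
  "hplus w h i = {x. w i \<bullet> x - h i > 0}"

definition hminus :: "(nat \<Rightarrow> 'a::euclidean_space) \<Rightarrow> (nat \<Rightarrow> real) \<Rightarrow> nat \<Rightarrow> 'a set" where
  "hminus w h i = {x. w i \<bullet> x - h i < 0}"

definition stable_arr ::
  "nat set \<Rightarrow> (nat \<Rightarrow> 'a::euclidean_space) \<Rightarrow> (nat \<Rightarrow> real) \<Rightarrow> 'a set \<Rightarrow> bool" where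
  "stable_arr I w h Y \<longleftrightarrow>
     (\<forall>i\<in>I. w i \<noteq> 0) \<and> open Y \<and> convex Y \<and>
     (\<forall>\<sigma>. \<sigma> \<subseteq> I \<longrightarrow> Y \<inter> (\<Inter>i\<in>\<sigma>. hyp w h i) \<noteq> {} \<longrightarrow>
        aff_dim (\<Inter>i\<in>\<sigma>. hyp w h i) = int DIM('a) - int (card \<sigma>))"

definition atom ::
  "nat set \<Rightarrow> (nat \<Rightarrow> 'a::euclidean_space) \<Rightarrow> (nat \<Rightarrow> real) \<Rightarrow> 'a set \<Rightarrow> nat set \<Rightarrow> 'a set" where
  "atom I w h Y \<sigma> = (Y \<inter> (\<Inter>i\<in>\<sigma>. hplus w h i)) - (\<Union>j\<in>I - \<sigma>. hplus w h j)"

definition code ::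
  "nat set \<Rightarrow> (nat \<Rightarrow> 'a::euclidean_space) \<Rightarrow> (nat \<Rightarrow> real) \<Rightarrow> 'a set \<Rightarrow> nat set set" where
  "code I w h Y = {\<sigma>. \<sigma> \<subseteq> I \<and> atom I w h Y \<sigma> \<noteq> {}}"

text \<open>Polar complex. Vertex i is Inl i, vertex bar i is Inr i.\<close>

definition Sigma_polar :: "nat set \<Rightarrow> nat set \<Rightarrow> (nat + nat) set" where
  "Sigma_polar I \<sigma> = Inl ` \<sigma> \<union> Inr ` (I - \<sigma>)"

definition polar_complex :: "nat set \<Rightarrow> nat set set \<Rightarrow> (nat + nat) set set" where
  "polar_complex I C = {F. \<exists>\<sigma>\<in>C. F \<subseteq> Sigma_polar I \<sigma>}"

definition fplus :: "(nat + nat) set \<Rightarrow> nat set" where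
  "fplus F = {i. Inl i \<in> F}"

definition fminus :: "(nat + nat) set \<Rightarrow> nat set" where
  "fminus F = {i. Inr i \<in> F}"

definition supp :: "(nat + nat) set \<Rightarrow> nat set" where
  "supp F = fplus F \<union> fminus F"

definition region ::
  "(nat \<Rightarrow> 'a::euclidean_space) \<Rightarrow> (nat \<Rightarrow> real) \<Rightarrow> 'a set \<Rightarrow> (nat + nat) set \<Rightarrow> 'a set" where
  "region w h X F = X \<inter> (\<Inter>i\<in>fplus F. hplus w h i) \<inter> (\<Inter>j\<in>fminus F. hminus w h j)"

text \<open>Gamma(2^S): subsets of S \<squnion> bar S containing no pair {i, bar i}.\<close>

definition full_polar :: "nat set \<Rightarrow> (nat + nat) set set" where
  "full_polar S = {G. G \<subseteq> Inl ` S \<union> Inr ` S \<and> (\<forall>i. \<not> (Inl i \<in> G \<and> Inr i \<in> G))}"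

definition nerve :: "'v set \<Rightarrow> ('v \<Rightarrow> 'b set) \<Rightarrow> 'v set set" where
  "nerve V U = {S. S \<subseteq> V \<and> (\<Inter>v\<in>S. U v) \<noteq> {}}"

definition facet :: "'v set set \<Rightarrow> 'v set \<Rightarrow> bool" where
  "facet \<Delta> \<tau> \<longleftrightarrow> \<tau> \<in> \<Delta> \<and> (\<forall>\<rho>\<in>\<Delta>. \<tau> \<subseteq> \<rho> \<longrightarrow> \<rho> = \<tau>)"

definition free_pair :: "'v set set \<Rightarrow> 'v set \<Rightarrow> 'v set \<Rightarrow> bool" where
  "free_pair \<Delta> \<sigma> \<tau> \<longleftrightarrow> facet \<Delta> \<tau> \<and> \<sigma> \<subset> \<tau> \<and>
     (\<forall>\<rho>. facet \<Delta> \<rho> \<and> \<sigma> \<subseteq> \<rho> \<longrightarrow> \<rho> = \<tau>)"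

definition collapse :: "'v set set \<Rightarrow> 'v set \<Rightarrow> 'v set set" where
  "collapse \<Delta> \<sigma> = {\<nu>\<in>\<Delta>. \<not> \<sigma> \<subseteq> \<nu>}"

inductive collapsible :: "'v set set \<Rightarrow> bool" where
  void: "collapsible {}"
| step: "free_pair \<Delta> \<sigma> \<tau> \<Longrightarrow> collapsible (collapse \<Delta> \<sigma>) \<Longrightarrow> collapsible \<Delta>"

end

theory Submission
  imports Defs
begin

text \<open>The region \<open>R = R_F\<close> is open and convex and inherits stability from \<open>X\<close>, so everything
  reduces to the nerve of the polar half-spaces \<open>H_i^+ \<inter> R\<close>, \<open>H_i^- \<inter> R\<close> for \<open>i \<in> S\<close>.
  If \<open>R\<close> meets the flat \<open>L = \<Inter>i\<in>S. H_i\<close>, stability makes the normals \<open>w_i\<close> linearly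
  independent, so next to a point of \<open>R \<inter> L\<close> every sign pattern is realised and the nerve is
  all of \<open>\<Gamma>(2^S)\<close>. Otherwise the nerve is collapsible, by induction on \<open>S\<close>: for \<open>j \<in> S\<close>
  the link of the vertex \<open>j\<close> (resp. \<open>j\<close>-bar) is the nerve of the smaller arrangement on
  \<open>R \<inter> H_j^+\<close> (resp. \<open>R \<inter> H_j^-\<close>), and deleting both vertices leaves the nerve on \<open>R\<close>.
  The convex set \<open>R \<inter> \<Inter>i\<in>S-{j}. H_i\<close> misses \<open>H_j\<close>, hence meets at most one side of it.
  If it meets neither side, all three smaller nerves collapse by induction, and so does the
  whole one, vertex by vertex; if it meets one side, the deletion of the opposite vertex is a
  cone over \<open>\<Gamma>(2^(S-{j}))\<close> and the link of that vertex collapses by induction.\<close>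

section \<open>Links, deletions and collapsibility\<close>

definition link :: "'v set set \<Rightarrow> 'v \<Rightarrow> 'v set set" where
  "link K v = {G. v \<notin> G \<and> insert v G \<in> K}"

definition deletion :: "'v set set \<Rightarrow> 'v \<Rightarrow> 'v set set" where
  "deletion K v = {G\<in>K. v \<notin> G}"

lemma deletion_Un_link: "K = deletion K v \<union> insert v ` link K v"
proof (intro equalityI subsetI)
  fix G assume G: "G \<in> K"
  show "G \<in> deletion K v \<union> insert v ` link K v"
  proof (cases "v \<in> G")
    case True
    then have "G = insert v (G - {v})" and "G - {v} \<in> link K v"
      using G by (auto simp: link_def insert_absorb)
    then show ?thesis by (intro UnI2 image_eqI)
  qed (use G in \<open>simp add: deletion_def\<close>)
qed (auto simp: deletion_def link_def)

lemma link_deletion: "u \<noteq> v \<Longrightarrow> link (deletion K u) v = {G\<in>link K v. u \<notin> G}"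
  by (auto simp: link_def deletion_def)

lemma facet_link_iff:
  assumes "v \<notin> \<rho>"
  shows "facet (link K v) \<rho> \<longleftrightarrow> facet K (insert v \<rho>)"
proof
  assume \<rho>: "facet (link K v) \<rho>"
  show "facet K (insert v \<rho>)" unfolding facet_def
  proof (intro conjI ballI impI)
    show "insert v \<rho> \<in> K" using \<rho> by (simp add: facet_def link_def)
    fix \<rho>' assume "\<rho>' \<in> K" "insert v \<rho> \<subseteq> \<rho>'"
    then have "\<rho>' - {v} \<in> link K v" "\<rho> \<subseteq> \<rho>' - {v}"
      using assms by (auto simp: link_def insert_absorb)
    then have "\<rho>' - {v} = \<rho>" using \<rho> by (simp add: facet_def)
    then show "\<rho>' = insert v \<rho>" using \<open>insert v \<rho> \<subseteq> \<rho>'\<close> by auto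
  qed
next
  assume \<rho>: "facet K (insert v \<rho>)"
  show "facet (link K v) \<rho>" unfolding facet_def
  proof (intro conjI ballI impI)
    show "\<rho> \<in> link K v" using \<rho> assms by (simp add: facet_def link_def)
    fix \<rho>' assume "\<rho>' \<in> link K v" "\<rho> \<subseteq> \<rho>'"
    then have "insert v \<rho>' = insert v \<rho>" "v \<notin> \<rho>'"
      using \<rho> by (auto simp: facet_def link_def)
    then show "\<rho>' = \<rho>" using assms by (metis insert_ident)
  qed
qed

lemma free_pair_insert:
  assumes "free_pair (link K v) \<sigma> \<tau>"
  shows "free_pair K (insert v \<sigma>) (insert v \<tau>)"
proof -
  have \<tau>: "facet (link K v) \<tau>" and \<sigma>\<tau>: "\<sigma> \<subset> \<tau>"
    and uniq: "\<And>\<rho>. facet (link K v) \<rho> \<Longrightarrow> \<sigma> \<subseteq> \<rho> \<Longrightarrow> \<rho> = \<tau>"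
    using assms unfolding free_pair_def by blast+
  have v\<tau>: "v \<notin> \<tau>" using \<tau> by (simp add: facet_def link_def)
  show ?thesis unfolding free_pair_def
  proof (intro conjI allI impI)
    show "facet K (insert v \<tau>)" using \<tau> v\<tau> by (simp add: facet_link_iff)
    show "insert v \<sigma> \<subset> insert v \<tau>" using \<sigma>\<tau> v\<tau> by auto
    fix \<rho> assume \<rho>: "facet K \<rho> \<and> insert v \<sigma> \<subseteq> \<rho>"
    have \<rho>_eq: "insert v (\<rho> - {v}) = \<rho>" using \<rho> by blast
    have "facet (link K v) (\<rho> - {v})"
      using facet_link_iff[of v "\<rho> - {v}" K] \<rho> unfolding \<rho>_eq by blast
    moreover have "\<sigma> \<subseteq> \<rho> - {v}" using \<rho> v\<tau> \<sigma>\<tau> by blast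
    ultimately have "\<rho> - {v} = \<tau>" by (rule uniq)
    with \<rho>_eq show "\<rho> = insert v \<tau>" by simp
  qed
qed

lemma collapsible_link_deletion:
  assumes "collapsible (link K v)" and "collapsible (deletion K v)"
  shows "collapsible K"
  using assms
proof (induction "link K v" arbitrary: K rule: collapsible.induct)
  case void
  then have "K = deletion K v" using deletion_Un_link[of K v] by simp
  then show ?case using void by simp
next
  case (step \<sigma> \<tau>)
  have "v \<notin> \<sigma>" using step.hyps(1) by (auto simp: free_pair_def facet_def link_def)
  then have "link (collapse K (insert v \<sigma>)) v = collapse (link K v) \<sigma>"
    and "deletion (collapse K (insert v \<sigma>)) v = deletion K v"
    by (auto simp: link_def deletion_def collapse_def)
  then have "collapsible (collapse K (insert v \<sigma>))" using step.hyps(3) step.prems by simp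
  then show ?case using free_pair_insert[OF step.hyps(1)] collapsible.step by blast
qed

lemma collapsible_cone:
  assumes "finite A" and "\<forall>G\<in>A. v \<notin> G"
  shows "collapsible (A \<union> insert v ` A)"
  using assms
proof (induction A rule: finite_psubset_induct)
  case (psubset A)
  show ?case
  proof (cases "A = {}")
    case False
    then obtain \<tau> where \<tau>: "\<tau> \<in> A" and max: "\<And>\<rho>. \<rho> \<in> A \<Longrightarrow> \<tau> \<subseteq> \<rho> \<Longrightarrow> \<rho> = \<tau>"
      using finite_has_maximal[OF psubset.hyps] by metis
    let ?K = "A \<union> insert v ` A"
    have v\<tau>: "v \<notin> \<tau>" using psubset.prems \<tau> by blast
    have above_\<tau>: "\<rho> \<in> ?K \<Longrightarrow> \<tau> \<subseteq> \<rho> \<Longrightarrow> \<rho> = \<tau> \<or> \<rho> = insert v \<tau>" for \<rho>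
      using max v\<tau> by (auto simp: subset_insert)
    have "facet ?K (insert v \<tau>)"
      unfolding facet_def using \<tau> v\<tau> above_\<tau> by blast
    moreover have "\<not> facet ?K \<tau>"
      unfolding facet_def using \<tau> v\<tau> by blast
    moreover have "\<rho> = insert v \<tau>" if "facet ?K \<rho>" "\<tau> \<subseteq> \<rho>" for \<rho>
    proof -
      have "\<rho> \<in> ?K" using that(1) by (simp add: facet_def)
      then show ?thesis using above_\<tau> that \<open>\<not> facet ?K \<tau>\<close> by metis
    qed
    ultimately have "free_pair ?K \<tau> (insert v \<tau>)"
      unfolding free_pair_def using v\<tau> by blast
    moreover have "collapse ?K \<tau> = (A - {\<tau>}) \<union> insert v ` (A - {\<tau>})"
      unfolding collapse_def using \<tau> max v\<tau> psubset.prems by (auto simp: subset_insert)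
    moreover have "collapsible ((A - {\<tau>}) \<union> insert v ` (A - {\<tau>}))"
      using psubset.IH[of "A - {\<tau>}"] \<tau> psubset.prems by blast
    ultimately show ?thesis using collapsible.step by metis
  qed (simp add: collapsible.void)
qed

section \<open>Half-spaces and stable arrangements\<close>

lemma open_hplus: "open (hplus w h i)"
  by (simp add: hplus_def open_halfspace_gt)

lemma open_hminus: "open (hminus w h i)"
  by (simp add: hminus_def open_halfspace_lt)

lemma convex_hplus: "convex (hplus w h i)"
  by (simp add: hplus_def convex_halfspace_gt)

lemma convex_hminus: "convex (hminus w h i)"
  by (simp add: hminus_def convex_halfspace_lt)

lemma convex_hyp: "convex (hyp w h i)"
  by (simp add: hyp_def convex_hyperplane)

definition polar_halfspace :: "(nat \<Rightarrow> 'a::euclidean_space) \<Rightarrow> (nat \<Rightarrow> real) \<Rightarrow> nat + nat \<Rightarrow> 'a set" where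
  "polar_halfspace w h v = (case v of Inl i \<Rightarrow> hplus w h i | Inr i \<Rightarrow> hminus w h i)"

lemma polar_halfspace_simps [simp]:
  "polar_halfspace w h (Inl i) = hplus w h i"
  "polar_halfspace w h (Inr i) = hminus w h i"
  by (simp_all add: polar_halfspace_def)

lemma open_polar_halfspace: "open (polar_halfspace w h v)"
  by (cases v) (simp_all add: open_hplus open_hminus)

lemma convex_polar_halfspace: "convex (polar_halfspace w h v)"
  by (cases v) (simp_all add: convex_hplus convex_hminus)

lemma convex_avoiding_hyp_cases:
  assumes "convex C" and "C \<inter> hyp w h j = {}"
  obtains (neither) "C \<inter> hplus w h j = {}" "C \<inter> hminus w h j = {}"
    | (one_side) v v' where "{v, v'} = {Inl j, Inr j}" "C \<inter> polar_halfspace w h v \<noteq> {}"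
        "C \<inter> polar_halfspace w h v' = {}"
proof -
  have "hplus w h j \<inter> C = {} \<or> hminus w h j \<inter> C = {}"
  proof (rule connectedD[OF convex_connected[OF assms(1)] open_hplus open_hminus])
    show "hplus w h j \<inter> hminus w h j \<inter> C = {}" by (auto simp: hplus_def hminus_def)
    show "C \<subseteq> hplus w h j \<union> hminus w h j"
      using assms(2) by (auto simp: hyp_def hplus_def hminus_def)
  qed
  then have some_side_empty: "C \<inter> hplus w h j = {} \<or> C \<inter> hminus w h j = {}"
    by (simp add: Int_commute)
  show thesis
  proof (cases "C \<inter> hplus w h j = {}")
    case True
    show thesis
    proof (cases "C \<inter> hminus w h j = {}")
      case False
      then show thesis using True one_side[of "Inr j" "Inl j"] by (simp add: insert_commute)
    qed (use True in \<open>rule neither\<close>)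
  next
    case False
    then show thesis using some_side_empty one_side[of "Inl j" "Inr j"] by simp
  qed
qed

lemma region_eq_INT_polar_halfspace: "region w h X F = X \<inter> (\<Inter>v\<in>F. polar_halfspace w h v)"
proof (intro set_eqI iffI)
  fix x assume "x \<in> region w h X F"
  then show "x \<in> X \<inter> (\<Inter>v\<in>F. polar_halfspace w h v)"
    by (auto simp: region_def fplus_def fminus_def polar_halfspace_def split: sum.split)
next
  fix x assume "x \<in> X \<inter> (\<Inter>v\<in>F. polar_halfspace w h v)"
  then show "x \<in> region w h X F"
    by (auto simp: region_def fplus_def fminus_def dest: INT_D)
qed

lemma stable_arr_mono:
  assumes "stable_arr S w h R" "S' \<subseteq> S" "R' \<subseteq> R" "open R'" "convex R'"
  shows "stable_arr S' w h R'"
  unfolding stable_arr_def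
proof (intro conjI allI impI ballI)
  fix \<sigma> assume "\<sigma> \<subseteq> S'" "R' \<inter> (\<Inter>i\<in>\<sigma>. hyp w h i) \<noteq> {}"
  then have "\<sigma> \<subseteq> S" "R \<inter> (\<Inter>i\<in>\<sigma>. hyp w h i) \<noteq> {}" using assms(2,3) by auto
  then show "aff_dim (\<Inter>i\<in>\<sigma>. hyp w h i) = int DIM('a) - int (card \<sigma>)"
    using assms(1) unfolding stable_arr_def by blast
qed (use assms in \<open>auto simp: stable_arr_def\<close>)

lemma stable_arr_region:
  assumes "stable_arr I w h X" "finite F" "S \<subseteq> I"
  shows "stable_arr S w h (region w h X F)"
proof (rule stable_arr_mono[OF assms(1,3)])
  have "open X" "convex X" using assms(1) by (simp_all add: stable_arr_def)
  then show "open (region w h X F)" "convex (region w h X F)"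
    unfolding region_eq_INT_polar_halfspace using assms(2)
    by (intro open_Int open_INT convex_Int convex_INT ballI open_polar_halfspace
          convex_polar_halfspace; simp)+
qed (auto simp: region_def)

lemma stable_arr_Int_polar_halfspace:
  assumes "stable_arr S w h R"
  shows "stable_arr S w h (R \<inter> polar_halfspace w h v)"
proof (rule stable_arr_mono[OF assms order_refl])
  have "open R" "convex R" using assms by (simp_all add: stable_arr_def)
  then show "open (R \<inter> polar_halfspace w h v)" "convex (R \<inter> polar_halfspace w h v)"
    by (simp_all add: open_Int convex_Int open_polar_halfspace convex_polar_halfspace)
qed auto

lemma stable_arr_dual_direction:
  fixes w :: "nat \<Rightarrow> 'a::euclidean_space"
  assumes "finite S" "stable_arr S w h R" "p \<in> R" "\<forall>k\<in>S. p \<in> hyp w h k" "i \<in> S"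
  shows "\<exists>u. w i \<bullet> u = 1 \<and> (\<forall>k\<in>S - {i}. w k \<bullet> u = 0)"
proof -
  have aff_dim_eq: "aff_dim (\<Inter>k\<in>\<sigma>. hyp w h k) = int DIM('a) - int (card \<sigma>)" if "\<sigma> \<subseteq> S" for \<sigma>
  proof -
    have "p \<in> R \<inter> (\<Inter>k\<in>\<sigma>. hyp w h k)" using assms(3,4) that by auto
    then show ?thesis using assms(2) that unfolding stable_arr_def by blast
  qed
  \<comment> \<open>stability: the flat of \<open>S - {i}\<close> has larger dimension than the flat of \<open>S\<close>\<close>
  have "card (S - {i}) < card S" using assms(1,5) by (rule card_Diff1_less)
  then have "(\<Inter>k\<in>S - {i}. hyp w h k) \<noteq> (\<Inter>k\<in>S. hyp w h k)"
    using aff_dim_eq[of "S - {i}"] aff_dim_eq[of S] by auto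
  then obtain q where q: "\<forall>k\<in>S - {i}. q \<in> hyp w h k" "q \<notin> hyp w h i"
    using assms(5) by blast
  have p: "w k \<bullet> p = h k" if "k \<in> S" for k using assms(4) that by (simp add: hyp_def)
  have "w i \<bullet> (q - p) \<noteq> 0" and "\<forall>k\<in>S - {i}. w k \<bullet> (q - p) = 0"
    using q p assms(5) by (auto simp: hyp_def inner_diff_right)
  then show ?thesis by (intro exI[of _ "(1 / (w i \<bullet> (q - p))) *\<^sub>R (q - p)"]) simp
qed

lemma stable_arr_exists_direction:
  fixes w :: "nat \<Rightarrow> 'a::euclidean_space"
  assumes "finite S" "stable_arr S w h R" "p \<in> R" "\<forall>k\<in>S. p \<in> hyp w h k"
  shows "\<exists>u. \<forall>k\<in>S. w k \<bullet> u = e k"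
proof -
  obtain d where d: "\<And>i. i \<in> S \<Longrightarrow> w i \<bullet> d i = 1 \<and> (\<forall>k\<in>S - {i}. w k \<bullet> d i = 0)"
    using stable_arr_dual_direction[OF assms] by metis
  have "w k \<bullet> (\<Sum>i\<in>S. e i *\<^sub>R d i) = e k" if "k \<in> S" for k
  proof -
    have "w k \<bullet> (\<Sum>i\<in>S. e i *\<^sub>R d i) = (\<Sum>i\<in>S. if i = k then e k else 0)"
      unfolding inner_sum_right by (rule sum.cong) (use d that in auto)
    also have "\<dots> = e k" using assms(1) that by simp
    finally show ?thesis .
  qed
  then show ?thesis by blast
qed

section \<open>The nerve of the polar half-spaces in a region\<close>

text \<open>Intersecting with \<open>R\<close> makes the nerve of an empty region the void complex (the family
  nerve would give \<open>{{}}\<close>); this is where the induction below bottoms out.\<close>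

definition polar_nerve ::
  "(nat \<Rightarrow> 'a::euclidean_space) \<Rightarrow> (nat \<Rightarrow> real) \<Rightarrow> nat set \<Rightarrow> 'a set \<Rightarrow> (nat + nat) set set" where
  "polar_nerve w h S R =
     {G. G \<subseteq> Inl ` S \<union> Inr ` S \<and> R \<inter> (\<Inter>v\<in>G. polar_halfspace w h v) \<noteq> {}}"

lemma nerve_eq_polar_nerve:
  assumes "R \<noteq> {}"
  shows "nerve (Inl ` S \<union> Inr ` S)
           (\<lambda>v. case v of Inl i \<Rightarrow> hplus w h i \<inter> R | Inr i \<Rightarrow> hminus w h i \<inter> R)
         = polar_nerve w h S R"
proof -
  have "(case v of Inl i \<Rightarrow> hplus w h i \<inter> R | Inr i \<Rightarrow> hminus w h i \<inter> R) = polar_halfspace w h v \<inter> R"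
    for v by (cases v) simp_all
  moreover have "(\<Inter>v\<in>G. polar_halfspace w h v \<inter> R) \<noteq> {} \<longleftrightarrow> R \<inter> (\<Inter>v\<in>G. polar_halfspace w h v) \<noteq> {}"
    for G using assms by (cases "G = {}") auto
  ultimately show ?thesis unfolding nerve_def polar_nerve_def by simp
qed

lemma polar_nerve_subset_full_polar: "polar_nerve w h S R \<subseteq> full_polar S"
proof
  fix G assume "G \<in> polar_nerve w h S R"
  then obtain x where G: "G \<subseteq> Inl ` S \<union> Inr ` S" and x: "\<forall>v\<in>G. x \<in> polar_halfspace w h v"
    by (auto simp: polar_nerve_def)
  have "\<not> (Inl i \<in> G \<and> Inr i \<in> G)" for i
  proof
    assume "Inl i \<in> G \<and> Inr i \<in> G"
    then have "x \<in> hplus w h i" "x \<in> hminus w h i" using x by force+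
    then show False by (simp add: hplus_def hminus_def)
  qed
  with G show "G \<in> full_polar S" by (simp add: full_polar_def)
qed

lemma finite_full_polar: "finite S \<Longrightarrow> finite (full_polar S)"
  by (rule finite_subset[of _ "Pow (Inl ` S \<union> Inr ` S)"]) (auto simp: full_polar_def)

lemma full_polar_subset_polar_nerve:
  assumes "finite S" "stable_arr S w h R" "p \<in> R" "\<forall>k\<in>S. p \<in> hyp w h k"
  shows "full_polar S \<subseteq> polar_nerve w h S R"
proof
  fix G assume G: "G \<in> full_polar S"
  define e where "e k = (if Inl k \<in> G then 1 else -1 :: real)" for k
  obtain u where u: "\<And>k. k \<in> S \<Longrightarrow> w k \<bullet> u = e k"
    using stable_arr_exists_direction[OF assms] by blast
  have "open R" using assms(2) by (simp add: stable_arr_def)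
  then obtain r where r: "r > 0" "ball p r \<subseteq> R" using assms(3) open_contains_ball by blast
  define t where "t = r / (2 * (norm u + 1))"
  have pos: "norm u + 1 > 0" by (simp add: add_nonneg_pos)
  have t: "t > 0" "t * norm u < r"
  proof -
    show "t > 0" using r pos by (simp add: t_def)
    have "t * norm u < t * (norm u + 1)" using \<open>t > 0\<close> by simp
    also have "\<dots> = r / 2" using pos by (simp add: t_def field_simps)
    finally show "t * norm u < r" using r by simp
  qed
  have "p + t *\<^sub>R u \<in> R" using r t by (auto simp: dist_norm)
  moreover have sign: "w k \<bullet> (p + t *\<^sub>R u) - h k = t * e k" if "k \<in> S" for k
    using assms(4) that u by (simp add: hyp_def inner_add_right)
  moreover have "p + t *\<^sub>R u \<in> polar_halfspace w h v" if "v \<in> G" for v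
  proof (cases v)
    case (Inl k)
    then have "k \<in> S" "e k = 1" using that G by (auto simp: full_polar_def e_def)
    then show ?thesis using Inl sign[of k] t(1) by (simp add: hplus_def)
  next
    case (Inr k)
    then have "k \<in> S" "e k = -1" using that G by (auto simp: full_polar_def e_def)
    then show ?thesis using Inr sign[of k] t(1) by (simp add: hminus_def)
  qed
  ultimately show "G \<in> polar_nerve w h S R"
    using G by (auto simp: polar_nerve_def full_polar_def)
qed

lemma polar_nerve_eq_full_polar:
  assumes "finite S" "stable_arr S w h R" "p \<in> R" "\<forall>k\<in>S. p \<in> hyp w h k"
  shows "polar_nerve w h S R = full_polar S"
  using full_polar_subset_polar_nerve[OF assms] polar_nerve_subset_full_polar by blast

lemma link_polar_nerve_insert:
  assumes "j \<notin> S" and "v \<in> {Inl j, Inr j}"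
  shows "link (polar_nerve w h (insert j S) R) v = polar_nerve w h S (R \<inter> polar_halfspace w h v)"
proof (intro set_eqI iffI)
  fix G assume "G \<in> link (polar_nerve w h (insert j S) R) v"
  then have v: "v \<notin> G" and G: "insert v G \<in> polar_nerve w h (insert j S) R"
    by (simp_all add: link_def)
  have "insert v G \<in> full_polar (insert j S)" using G polar_nerve_subset_full_polar by blast
  then have "G \<subseteq> Inl ` S \<union> Inr ` S" using v assms(2) by (auto simp: full_polar_def)
  then show "G \<in> polar_nerve w h S (R \<inter> polar_halfspace w h v)"
    using G by (auto simp: polar_nerve_def Int_assoc)
next
  fix G assume "G \<in> polar_nerve w h S (R \<inter> polar_halfspace w h v)"
  then show "G \<in> link (polar_nerve w h (insert j S) R) v"
    using assms by (auto simp: link_def polar_nerve_def Int_assoc)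
qed

lemma link_deletion_polar_nerve_insert:
  assumes "j \<notin> S" and "{v, v'} = {Inl j, Inr j}"
  shows "link (deletion (polar_nerve w h (insert j S) R) v') v =
           polar_nerve w h S (R \<inter> polar_halfspace w h v)"
proof -
  have "v' \<noteq> v" "v \<in> {Inl j, Inr j}" "v' \<notin> Inl ` S \<union> Inr ` S"
    using assms by (auto simp: doubleton_eq_iff)
  then have "link (deletion (polar_nerve w h (insert j S) R) v') v =
      {G \<in> polar_nerve w h S (R \<inter> polar_halfspace w h v). v' \<notin> G}"
    using assms(1) by (simp add: link_deletion link_polar_nerve_insert)
  then show ?thesis using \<open>v' \<notin> Inl ` S \<union> Inr ` S\<close> by (auto simp: polar_nerve_def)
qed

lemma deletion_deletion_polar_nerve_insert:
  assumes "j \<notin> S" and "{v, v'} = {Inl j, Inr j}"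
  shows "deletion (deletion (polar_nerve w h (insert j S) R) v') v = polar_nerve w h S R"
proof -
  have "G \<subseteq> Inl ` insert j S \<union> Inr ` insert j S \<and> v \<notin> G \<and> v' \<notin> G \<longleftrightarrow> G \<subseteq> Inl ` S \<union> Inr ` S"
    for G :: "(nat + nat) set"
    using assms by (auto simp: doubleton_eq_iff)
  then show ?thesis by (auto simp: deletion_def polar_nerve_def)
qed

lemma collapsible_polar_nerve_insert:
  assumes "j \<notin> S" and "collapsible (polar_nerve w h S R)"
    and "collapsible (polar_nerve w h S (R \<inter> hplus w h j))"
    and "collapsible (polar_nerve w h S (R \<inter> hminus w h j))"
  shows "collapsible (polar_nerve w h (insert j S) R)"
proof (rule collapsible_link_deletion[where v = "Inr j"])
  show "collapsible (link (polar_nerve w h (insert j S) R) (Inr j))"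
    using assms(1,4) by (simp add: link_polar_nerve_insert)
  show "collapsible (deletion (polar_nerve w h (insert j S) R) (Inr j))"
    by (rule collapsible_link_deletion[where v = "Inl j"])
      (simp_all add: assms link_deletion_polar_nerve_insert deletion_deletion_polar_nerve_insert)
qed

lemma collapsible_deletion_polar_nerve_insert:
  assumes "finite S" and "j \<notin> S" and "{v, v'} = {Inl j, Inr j}" and "stable_arr S w h R"
    and "p \<in> R \<inter> polar_halfspace w h v" and "\<forall>i\<in>S. p \<in> hyp w h i"
  shows "collapsible (deletion (polar_nerve w h (insert j S) R) v')"
proof -
  let ?K = "deletion (polar_nerve w h (insert j S) R) v'"
  have "polar_nerve w h S (R \<inter> polar_halfspace w h v) = full_polar S"
    using assms(5,6) by (intro polar_nerve_eq_full_polar assms(1) stable_arr_Int_polar_halfspace assms(4))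
  moreover have "polar_nerve w h S R = full_polar S"
    using assms(5,6) by (intro polar_nerve_eq_full_polar assms(1,4)) auto
  ultimately have "?K = full_polar S \<union> insert v ` full_polar S"
    using deletion_Un_link[of ?K v]
    by (simp add: link_deletion_polar_nerve_insert deletion_deletion_polar_nerve_insert assms(2,3))
  moreover have "\<forall>G\<in>full_polar S. v \<notin> G"
    using assms(2,3) by (auto simp: full_polar_def doubleton_eq_iff)
  ultimately show ?thesis
    using collapsible_cone[OF finite_full_polar[OF assms(1)]] by simp
qed

lemma collapsible_polar_nerve:
  assumes "finite S" and "stable_arr S w h R" and "R \<inter> (\<Inter>i\<in>S. hyp w h i) = {}"
  shows "collapsible (polar_nerve w h S R)"
  using assms
proof (induction S arbitrary: R rule: finite_induct)
  case empty
  then show ?case by (simp add: polar_nerve_def collapsible.void)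
next
  case (insert j S)
  define L where "L = (\<Inter>i\<in>S. hyp w h i)"
  have "open R" "convex R" using insert.prems(1) by (simp_all add: stable_arr_def)
  have stable: "stable_arr S w h R"
    using stable_arr_mono[OF insert.prems(1) _ order_refl \<open>open R\<close> \<open>convex R\<close>] by blast
  have IH_half: "collapsible (polar_nerve w h S (R \<inter> polar_halfspace w h v))"
    if "R \<inter> L \<inter> polar_halfspace w h v = {}" for v
    using insert.IH[OF stable_arr_Int_polar_halfspace[OF stable]] that by (simp add: L_def Int_ac)
  have off_hyp: "R \<inter> L \<inter> hyp w h j = {}" using insert.prems(2) by (auto simp: L_def)
  have "convex (R \<inter> L)"
    unfolding L_def by (intro convex_Int convex_INT \<open>convex R\<close> convex_hyp)
  then show ?case
    using off_hyp
  proof (cases rule: convex_avoiding_hyp_cases)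
    case neither
    have "R \<inter> L \<subseteq> (R \<inter> L \<inter> hplus w h j) \<union> (R \<inter> L \<inter> hminus w h j) \<union> (R \<inter> L \<inter> hyp w h j)"
      by (auto simp: hyp_def hplus_def hminus_def)
    then have "R \<inter> L = {}" using neither off_hyp by blast
    then show ?thesis
      using insert.IH[OF stable] IH_half[of "Inl j"] IH_half[of "Inr j"] neither
      by (intro collapsible_polar_nerve_insert insert.hyps(2)) (simp_all add: L_def)
  next
    case (one_side v v')
    obtain p where p: "p \<in> R \<inter> polar_halfspace w h v" "\<forall>i\<in>S. p \<in> hyp w h i"
      using one_side(2) by (auto simp: L_def)
    have "v' \<in> {Inl j, Inr j}" using one_side(1) by blast
    then have "collapsible (link (polar_nerve w h (insert j S) R) v')"
      using IH_half one_side(3) insert.hyps(2) by (simp add: link_polar_nerve_insert)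
    moreover have "collapsible (deletion (polar_nerve w h (insert j S) R) v')"
      using insert.hyps one_side(1) stable p by (rule collapsible_deletion_polar_nerve_insert)
    ultimately show ?thesis by (rule collapsible_link_deletion)
  qed
qed

lemma finite_polar_complex_code_face:
  assumes "finite I" and "F \<in> polar_complex I (code I w h X)"
  shows "finite F"
proof -
  obtain \<sigma> where "\<sigma> \<subseteq> I" "F \<subseteq> Sigma_polar I \<sigma>"
    using assms(2) by (auto simp: polar_complex_def code_def)
  then have "F \<subseteq> Inl ` I \<union> Inr ` I" unfolding Sigma_polar_def by blast
  then show ?thesis using assms(1) by (auto intro: finite_subset)
qed

theorem proposition3p7:
  fixes w :: "nat \<Rightarrow> 'a::euclidean_space" and h :: "nat \<Rightarrow> real"
    and X :: "'a set" and n :: nat and F :: "(nat + nat) set"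
  assumes stable: "stable_arr {1..n} w h X"
    and face: "F \<in> polar_complex {1..n} (code {1..n} w h X)"
    and small: "card F < n"
    and nonempty: "region w h X F \<noteq> {}"
  shows "stable_arr ({1..n} - supp F) w h (region w h X F) \<and>
    (let S = {1..n} - supp F; R = region w h X F;
         N = nerve (Inl ` S \<union> Inr ` S)
               (\<lambda>v. case v of Inl i \<Rightarrow> hplus w h i \<inter> R | Inr i \<Rightarrow> hminus w h i \<inter> R)
     in collapsible N \<or> N = full_polar S)"
proof -
  define S where "S = {1..n} - supp F"
  define R where "R = region w h X F"
  have "finite S" by (simp add: S_def)
  have stable_R: "stable_arr S w h R"
    unfolding S_def R_def
    using stable finite_polar_complex_code_face[OF _ face] by (intro stable_arr_region) auto
  have "collapsible (polar_nerve w h S R) \<or> polar_nerve w h S R = full_polar S"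
  proof (cases "R \<inter> (\<Inter>i\<in>S. hyp w h i) = {}")
    case True
    then show ?thesis using collapsible_polar_nerve[OF \<open>finite S\<close> stable_R] by simp
  next
    case False
    then obtain p where "p \<in> R" "\<forall>i\<in>S. p \<in> hyp w h i" by blast
    then show ?thesis using polar_nerve_eq_full_polar[OF \<open>finite S\<close> stable_R] by simp
  qed
  moreover have "nerve (Inl ` S \<union> Inr ` S)
      (\<lambda>v. case v of Inl i \<Rightarrow> hplus w h i \<inter> R | Inr i \<Rightarrow> hminus w h i \<inter> R) = polar_nerve w h S R"
    using nonempty unfolding R_def by (rule nerve_eq_polar_nerve)
  ultimately show ?thesis using stable_R unfolding S_def R_def Let_def by simp
qed

end
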